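(* Assume the system $\dot x(t)=f(x_t,u(t))$ as in the context is robustly forward complete. Let $S\subseteq\mathcal X^n$ be compact, $\mathcal U\subseteq\mathbb R^m$ bounded and $T>0$. Then the closure in $\mathcal X^n$ of $\mathcal R^T_{\mathcal U}(S)=\{x_t^{\xi,u}:\ 0\le t\le T,\ u\in\mathcal M_{\mathcal U},\ \xi\in S\}$ is compact.
   Context: Fix $\theta>0$; $\mathcal X^n=C([-\theta,0],\mathbb R^n)$ with norm $\|\xi\|_{\mathcal X}=\max_{s\in[-\theta,0]}|\xi(s)|$; $x_t(s)=x(t+s)$. $\mathcal M$: measurable locally essentially bounded $u:\mathbb R_{\ge0}\to\mathbb R^m$, $\|u\|$ the essential supremum on $[0,\infty)$; $\mathcal M_{\mathcal U}$: those with values in $\mathcal U$. $f:\mathcal X^n\times\mathbb R^m\to\mathbb R^n$ is locally Lipschitz and maps bounded sets to bounded sets; $x(\cdot,\xi,u)$ is the unique maximal solution with $x(s)=\xi(s)$ on $[-\theta,0]$ and input $u$, and $x_t^{\xi,u}(s)=x(t+s,\xi,u)$. Robustly forward complete: every maximal solution is defined for all $t\ge0$ and for every $T,R>0$, $\sup\{\|x_t^{\xi,u}\|_{\mathcal X}:\|\xi\|_{\mathcal X}\le R,\|u\|\le R,t\in[0,T]\}<\infty$. *)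

theory Defs
  imports "HOL-Analysis.Analysis"
begin

text \<open>State space X^n = C([-theta,0], R^n) with the sup-norm metric, realised as the library's
  metric space of (bounded) continuous functions on the topological space [-theta,0]
  (elements are extensional, i.e. undefined outside [-theta,0]).\<close>
definition Xspace :: "real \<Rightarrow> (real \<Rightarrow> real^'n) metric" where
  "Xspace \<theta> = cfunspace (top_of_set {-\<theta>..0}) euclidean_metric"

definition xnorm :: "real \<Rightarrow> (real \<Rightarrow> real^'n) \<Rightarrow> real" where
  "xnorm \<theta> \<xi> = (SUP s\<in>{-\<theta>..0}. norm (\<xi> s))"

definition hist :: "real \<Rightarrow> (real \<Rightarrow> real^'n) \<Rightarrow> real \<Rightarrow> (real \<Rightarrow> real^'n)" where
  "hist \<theta> x t = restrict (\<lambda>s. x (t + s)) {-\<theta>..0}"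

definition inputs :: "(real \<Rightarrow> real^'m) set" where
  "inputs = {u. u \<in> borel_measurable (lebesgue_on {0..}) \<and>
                (\<forall>T\<ge>0. \<exists>C. AE s in lebesgue_on {0..T}. norm (u s) \<le> C)}"

definition inputs_in :: "(real^'m) set \<Rightarrow> (real \<Rightarrow> real^'m) set" where
  "inputs_in U = {u \<in> inputs. \<forall>t\<ge>0. u t \<in> U}"

definition unorm_le :: "(real \<Rightarrow> real^'m) \<Rightarrow> real \<Rightarrow> bool" where
  "unorm_le u R \<longleftrightarrow> (AE t in lebesgue_on {0..}. norm (u t) \<le> R)"

definition loc_lipschitz ::
  "real \<Rightarrow> ((real \<Rightarrow> real^'n) \<Rightarrow> real^'m \<Rightarrow> real^'n) \<Rightarrow> bool" where
  "loc_lipschitz \<theta> f \<longleftrightarrow>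
     (\<forall>\<xi>0\<in>mspace (Xspace \<theta>). \<forall>v0. \<exists>r>0. \<exists>L.
        \<forall>\<xi>1\<in>mspace (Xspace \<theta>). \<forall>\<xi>2\<in>mspace (Xspace \<theta>). \<forall>v1 v2.
          mdist (Xspace \<theta>) \<xi>1 \<xi>0 < r \<and> dist v1 v0 < r \<and>
          mdist (Xspace \<theta>) \<xi>2 \<xi>0 < r \<and> dist v2 v0 < r \<longrightarrow>
          norm (f \<xi>1 v1 - f \<xi>2 v2) \<le> L * (mdist (Xspace \<theta>) \<xi>1 \<xi>2 + dist v1 v2))"

definition bounded_on_bounded ::
  "real \<Rightarrow> ((real \<Rightarrow> real^'n) \<Rightarrow> real^'m \<Rightarrow> real^'n) \<Rightarrow> bool" where
  "bounded_on_bounded \<theta> f \<longleftrightarrow>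
     (\<forall>R. \<exists>C. \<forall>\<xi>\<in>mspace (Xspace \<theta>). \<forall>v.
        xnorm \<theta> \<xi> \<le> R \<and> norm v \<le> R \<longrightarrow> norm (f \<xi> v) \<le> C)"

text \<open>x is a (Caratheodory) solution on [-theta, inf) of x'(t) = f(x_t, u(t)) with
  initial history xi, written in integral form.\<close>
definition is_solution ::
  "real \<Rightarrow> ((real \<Rightarrow> real^'n) \<Rightarrow> real^'m \<Rightarrow> real^'n) \<Rightarrow> (real \<Rightarrow> real^'n)
     \<Rightarrow> (real \<Rightarrow> real^'m) \<Rightarrow> (real \<Rightarrow> real^'n) \<Rightarrow> bool" where
  "is_solution \<theta> f \<xi> u x \<longleftrightarrow>
     (\<forall>s\<in>{-\<theta>..0}. x s = \<xi> s) \<and> continuous_on {-\<theta>..} x \<and>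
     (\<forall>t\<ge>0. ((\<lambda>s. f (hist \<theta> x s) (u s)) has_integral (x t - x 0)) {0..t})"

definition RFC ::
  "real \<Rightarrow> ((real \<Rightarrow> real^'n) \<Rightarrow> real^'m \<Rightarrow> real^'n) \<Rightarrow> bool" where
  "RFC \<theta> f \<longleftrightarrow>
     (\<forall>\<xi>\<in>mspace (Xspace \<theta>). \<forall>u\<in>inputs. \<exists>x. is_solution \<theta> f \<xi> u x) \<and>
     (\<forall>T>0. \<forall>R>0. \<exists>C. \<forall>\<xi>\<in>mspace (Xspace \<theta>). \<forall>u\<in>inputs. \<forall>x. \<forall>t\<in>{0..T}.
        xnorm \<theta> \<xi> \<le> R \<and> unorm_le u R \<and> is_solution \<theta> f \<xi> u x
          \<longrightarrow> xnorm \<theta> (hist \<theta> x t) \<le> C)"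

definition reach_set ::
  "real \<Rightarrow> ((real \<Rightarrow> real^'n) \<Rightarrow> real^'m \<Rightarrow> real^'n) \<Rightarrow> real \<Rightarrow> (real^'m) set
     \<Rightarrow> (real \<Rightarrow> real^'n) set \<Rightarrow> (real \<Rightarrow> real^'n) set" where
  "reach_set \<theta> f T U S =
     {hist \<theta> x t | t u \<xi> x. 0 \<le> t \<and> t \<le> T \<and> u \<in> inputs_in U \<and> \<xi> \<in> S \<and>
                           is_solution \<theta> f \<xi> u x}"

end

theory Submission
  imports Defs "HOL-Complex_Analysis.Great_Picard"
begin

text \<open>Arzela-Ascoli in \<open>C([-\<theta>,0], \<real>\<^sup>n)\<close>: the reachable segments are uniformly bounded by
  robust forward completeness, and they are uniformly equicontinuous. For the latter, view every
  segment \<open>x\<^sub>t\<close> as a translate of a piece of a trajectory on \<open>[-\<theta>,T]\<close>. On \<open>[-\<theta>,0]\<close> the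
  trajectories are the initial histories, which form a compact and hence equicontinuous family; on
  \<open>[0,T]\<close> their states are bounded, so \<open>f\<close> is bounded along them and they share a Lipschitz
  constant. In the complete space \<open>X\<^sup>n\<close> a totally bounded set has compact closure.\<close>

lemma mspace_Xspace_iff:
  "h \<in> mspace (Xspace \<theta>) \<longleftrightarrow> h \<in> extensional {-\<theta>..0} \<and> continuous_on {-\<theta>..0} h"
proof -
  have "compactin (top_of_set {-\<theta>..0::real}) {-\<theta>..0}"
    by (simp add: compactin_subtopology)
  then show ?thesis
    unfolding Xspace_def
    by (subst compactin_mspace_cfunspace) (auto simp: continuous_map_iff_continuous)
qed

lemma dist_le_mdist_Xspace:
  assumes "h \<in> mspace (Xspace \<theta>)" "g \<in> mspace (Xspace \<theta>)" "s \<in> {-\<theta>..0}"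
  shows "dist (h s) (g s) \<le> mdist (Xspace \<theta>) h g"
  using assms mdist_cfunspace_imp_mdist_le[of h "top_of_set {-\<theta>..0}" euclidean_metric g]
  by (simp add: Xspace_def)

lemma mdist_Xspace_le:
  assumes "0 \<le> B" "\<And>s. s \<in> {-\<theta>..0} \<Longrightarrow> dist (h s) (g s) \<le> B"
  shows "mdist (Xspace \<theta>) h g \<le> B"
  unfolding Xspace_def using assms by (intro mdist_cfunspace_le) auto

lemma mcomplete_Xspace: "Metric_space.mcomplete (mspace (Xspace \<theta>)) (mdist (Xspace \<theta>))"
proof -
  have "mcomplete_of (cfunspace (top_of_set {-\<theta>..0}) Met_TC.Self :: (real \<Rightarrow> real^'n) metric)"
    by (rule Met_TC.mcomplete_cfunspace) (simp add: mcomplete_iff_complete complete_UNIV)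
  then show ?thesis
    by (simp add: mcomplete_of_def Xspace_def Met_TC.Self_def euclidean_metric_def)
qed

lemma norm_le_xnorm:
  assumes "h \<in> mspace (Xspace \<theta>)" "s \<in> {-\<theta>..0}"
  shows "norm (h s) \<le> xnorm \<theta> h"
proof -
  have "compact (h ` {-\<theta>..0})"
    using assms(1) by (simp add: mspace_Xspace_iff compact_continuous_image)
  then have "bdd_above (norm ` h ` {-\<theta>..0})"
    by (simp add: bounded_imp_bdd_above bounded_norm_comp compact_imp_bounded)
  then show ?thesis
    unfolding xnorm_def using assms(2) by (intro cSUP_upper2) (auto simp: image_comp)
qed

lemma xnorm_le:
  assumes "\<theta> \<ge> 0" "\<And>s. s \<in> {-\<theta>..0} \<Longrightarrow> norm (h s) \<le> R"
  shows "xnorm \<theta> h \<le> R"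
  unfolding xnorm_def using assms by (intro cSUP_least) auto

lemma hist_in_mspace_Xspace:
  assumes "continuous_on {-\<theta>..} x" "t \<ge> 0"
  shows "hist \<theta> x t \<in> mspace (Xspace \<theta>)"
proof -
  have "continuous_on {-\<theta>..0} (\<lambda>s. x (t + s))"
    by (rule continuous_on_compose2[OF assms(1)]) (auto intro!: continuous_intros simp: assms)
  then have "continuous_on {-\<theta>..0} (hist \<theta> x t)"
    unfolding hist_def by (rule continuous_on_cong[THEN iffD1, rotated 2]) auto
  then show ?thesis
    by (simp add: mspace_Xspace_iff hist_def)
qed

definition uniformly_equicontinuous_on ::
  "'a::metric_space set \<Rightarrow> ('a \<Rightarrow> 'b::metric_space) set \<Rightarrow> bool" where
  "uniformly_equicontinuous_on I F \<longleftrightarrow>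
     (\<forall>e>0. \<exists>d>0. \<forall>h\<in>F. \<forall>a\<in>I. \<forall>b\<in>I. dist a b < d \<longrightarrow> dist (h a) (h b) < e)"

lemma uniformly_equicontinuous_onD:
  assumes "uniformly_equicontinuous_on I F" "e > 0"
  obtains d where "d > 0"
    "\<And>h a b. h \<in> F \<Longrightarrow> a \<in> I \<Longrightarrow> b \<in> I \<Longrightarrow> dist a b < d \<Longrightarrow> dist (h a) (h b) < e"
proof -
  obtain d where "d > 0" "\<forall>h\<in>F. \<forall>a\<in>I. \<forall>b\<in>I. dist a b < d \<longrightarrow> dist (h a) (h b) < e"
    using assms unfolding uniformly_equicontinuous_on_def by auto
  then show ?thesis
    using that by simp
qed

lemma uniformly_equicontinuous_on_Un:
  assumes "uniformly_equicontinuous_on I F" "uniformly_equicontinuous_on I G"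
  shows "uniformly_equicontinuous_on I (F \<union> G)"
  unfolding uniformly_equicontinuous_on_def
proof (intro allI impI)
  fix e :: real assume "e > 0"
  obtain d1 where "d1 > 0"
    and "\<And>h a b. h \<in> F \<Longrightarrow> a \<in> I \<Longrightarrow> b \<in> I \<Longrightarrow> dist a b < d1 \<Longrightarrow> dist (h a) (h b) < e"
    using uniformly_equicontinuous_onD[OF assms(1) \<open>e > 0\<close>] by blast
  moreover obtain d2 where "d2 > 0"
    and "\<And>h a b. h \<in> G \<Longrightarrow> a \<in> I \<Longrightarrow> b \<in> I \<Longrightarrow> dist a b < d2 \<Longrightarrow> dist (h a) (h b) < e"
    using uniformly_equicontinuous_onD[OF assms(2) \<open>e > 0\<close>] by blast
  ultimately show "\<exists>d>0. \<forall>h\<in>F \<union> G. \<forall>a\<in>I. \<forall>b\<in>I. dist a b < d \<longrightarrow> dist (h a) (h b) < e"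
    by (intro exI[of _ "min d1 d2"]) auto
qed

lemma uniformly_equicontinuous_on_finite:
  assumes "finite F" "\<And>h. h \<in> F \<Longrightarrow> uniformly_continuous_on I h"
  shows "uniformly_equicontinuous_on I F"
  using assms
proof (induction F rule: finite_induct)
  case empty
  then show ?case by (auto simp: uniformly_equicontinuous_on_def)
next
  case (insert h F)
  have "uniformly_equicontinuous_on I {h}"
    using insert.prems[of h] unfolding uniformly_equicontinuous_on_def uniformly_continuous_on_def
    by blast
  then show ?case
    using insert uniformly_equicontinuous_on_Un[of I "{h}" F] by simp
qed

lemma uniformly_equicontinuous_on_if_agree:
  assumes "uniformly_equicontinuous_on I G" "\<And>h. h \<in> F \<Longrightarrow> \<exists>g\<in>G. \<forall>s\<in>I. h s = g s"
  shows "uniformly_equicontinuous_on I F"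
  unfolding uniformly_equicontinuous_on_def
proof (intro allI impI)
  fix e :: real assume "e > 0"
  then obtain d where "d > 0"
    and d: "\<And>g a b. g \<in> G \<Longrightarrow> a \<in> I \<Longrightarrow> b \<in> I \<Longrightarrow> dist a b < d \<Longrightarrow> dist (g a) (g b) < e"
    using uniformly_equicontinuous_onD[OF assms(1)] by blast
  have "dist (h a) (h b) < e" if "h \<in> F" "a \<in> I" "b \<in> I" "dist a b < d" for h a b
    using assms(2)[OF that(1)] d that by force
  then show "\<exists>d>0. \<forall>h\<in>F. \<forall>a\<in>I. \<forall>b\<in>I. dist a b < d \<longrightarrow> dist (h a) (h b) < e"
    using \<open>d > 0\<close> by blast
qed

lemma uniformly_equicontinuous_on_if_lipschitz:
  assumes "\<And>h. h \<in> F \<Longrightarrow> K-lipschitz_on I h"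
  shows "uniformly_equicontinuous_on I F"
  unfolding uniformly_equicontinuous_on_def
proof (intro allI impI)
  fix e :: real assume "e > 0"
  have "dist (h a) (h b) < e"
    if "h \<in> F" "a \<in> I" "b \<in> I" "dist a b < e / (\<bar>K\<bar> + 1)" for h a b
  proof -
    have "dist (h a) (h b) \<le> K * dist a b"
      using assms that by (blast intro: lipschitz_onD)
    also have "\<dots> \<le> (\<bar>K\<bar> + 1) * dist a b"
      by (intro mult_right_mono) auto
    also have "\<dots> < e"
      using that(4) by (simp add: field_simps add_pos_nonneg)
    finally show ?thesis .
  qed
  then show "\<exists>d>0. \<forall>h\<in>F. \<forall>a\<in>I. \<forall>b\<in>I. dist a b < d \<longrightarrow> dist (h a) (h b) < e"
    using \<open>e > 0\<close> by (intro exI[of _ "e / (\<bar>K\<bar> + 1)"]) (auto simp: add_pos_nonneg)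
qed

lemma uniformly_equicontinuous_on_interval_Un:
  fixes F :: "(real \<Rightarrow> 'b::metric_space) set"
  assumes "uniformly_equicontinuous_on {a..b} F" "uniformly_equicontinuous_on {b..c} F"
  shows "uniformly_equicontinuous_on {a..c} F"
  unfolding uniformly_equicontinuous_on_def
proof (intro allI impI)
  fix e :: real assume "e > 0"
  then obtain d1 where "d1 > 0"
    and d1: "\<And>h p q. h \<in> F \<Longrightarrow> p \<in> {a..b} \<Longrightarrow> q \<in> {a..b} \<Longrightarrow> dist p q < d1 \<Longrightarrow> dist (h p) (h q) < e/2"
    using uniformly_equicontinuous_onD[OF assms(1), of "e/2"] by auto
  obtain d2 where "d2 > 0"
    and d2: "\<And>h p q. h \<in> F \<Longrightarrow> p \<in> {b..c} \<Longrightarrow> q \<in> {b..c} \<Longrightarrow> dist p q < d2 \<Longrightarrow> dist (h p) (h q) < e/2"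
    using uniformly_equicontinuous_onD[OF assms(2), of "e/2"] \<open>e > 0\<close> by auto
  have ordered: "dist (h p) (h q) < e"
    if "h \<in> F" "p \<in> {a..c}" "q \<in> {a..c}" "p \<le> q" "q - p < min d1 d2" for h p q
  proof -
    consider "q \<le> b" | "b \<le> p" | "p < b" "b < q" by linarith
    then show ?thesis
    proof cases
      case 1
      then have "dist (h p) (h q) < e/2" using d1[of h p q] that by (auto simp: dist_real_def)
      then show ?thesis using \<open>e > 0\<close> by linarith
    next
      case 2
      then have "dist (h p) (h q) < e/2" using d2[of h p q] that by (auto simp: dist_real_def)
      then show ?thesis using \<open>e > 0\<close> by linarith
    next
      case 3
      then have "dist (h p) (h b) < e/2" "dist (h b) (h q) < e/2"
        using d1[of h p b] d2[of h b q] that by (auto simp: dist_real_def)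
      then show ?thesis by (metis dist_commute dist_triangle_half_l)
    qed
  qed
  show "\<exists>d>0. \<forall>h\<in>F. \<forall>p\<in>{a..c}. \<forall>q\<in>{a..c}. dist p q < d \<longrightarrow> dist (h p) (h q) < e"
  proof (intro exI[of _ "min d1 d2"] conjI ballI impI)
    fix h p q assume "h \<in> F" "p \<in> {a..c}" "q \<in> {a..c}" "dist p q < min d1 d2"
    then show "dist (h p) (h q) < e"
      using ordered[of h p q] ordered[of h q p] by (cases "p \<le> q") (auto simp: dist_real_def dist_commute)
  qed (use \<open>d1 > 0\<close> \<open>d2 > 0\<close> in simp)
qed

lemma uniformly_equicontinuous_on_hist:
  assumes "uniformly_equicontinuous_on {-\<theta>..T} F"
  shows "uniformly_equicontinuous_on {-\<theta>..0} {hist \<theta> x t | x t. x \<in> F \<and> t \<in> {0..T}}"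
  unfolding uniformly_equicontinuous_on_def
proof (intro allI impI)
  fix e :: real assume "e > 0"
  then obtain d where "d > 0" and d: "\<And>x p q. x \<in> F \<Longrightarrow> p \<in> {-\<theta>..T} \<Longrightarrow> q \<in> {-\<theta>..T} \<Longrightarrow>
      dist p q < d \<Longrightarrow> dist (x p) (x q) < e"
    using uniformly_equicontinuous_onD[OF assms] by blast
  have "dist (hist \<theta> x t a) (hist \<theta> x t b) < e"
    if "x \<in> F" "t \<in> {0..T}" "a \<in> {-\<theta>..0}" "b \<in> {-\<theta>..0}" "dist a b < d" for x t a b
    using that d[of x "t + a" "t + b"] by (auto simp: hist_def dist_real_def)
  then show "\<exists>d>0. \<forall>h\<in>{hist \<theta> x t | x t. x \<in> F \<and> t \<in> {0..T}}. \<forall>a\<in>{-\<theta>..0}. \<forall>b\<in>{-\<theta>..0}.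
      dist a b < d \<longrightarrow> dist (h a) (h b) < e"
    using \<open>d > 0\<close> by blast
qed

lemma compactin_Xspace_imp_uniformly_equicontinuous:
  assumes "compactin (mtopology_of (Xspace \<theta>)) S"
  shows "uniformly_equicontinuous_on {-\<theta>..0} S"
  unfolding uniformly_equicontinuous_on_def
proof (intro allI impI)
  interpret X: Metric_space "mspace (Xspace \<theta>)" "mdist (Xspace \<theta>)"
    by (rule Metric_space_mspace_mdist)
  fix e :: real assume "e > 0"
  have "X.mtotally_bounded S"
    using assms by (intro X.compactin_imp_mtotally_bounded) (simp add: mtopology_of_def)
  then obtain N where N: "finite N" "N \<subseteq> S" "S \<subseteq> (\<Union>k\<in>N. X.mball k (e/3))"
    unfolding X.mtotally_bounded_def using \<open>e > 0\<close> by (meson divide_pos_pos zero_less_numeral)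
  have "S \<subseteq> mspace (Xspace \<theta>)"
    using compactin_subset_topspace[OF assms] by simp
  then have "uniformly_equicontinuous_on {-\<theta>..0} N"
    using N by (intro uniformly_equicontinuous_on_finite compact_uniformly_continuous)
      (auto simp: mspace_Xspace_iff)
  then obtain d where "d > 0" and d: "\<And>k a b. k \<in> N \<Longrightarrow> a \<in> {-\<theta>..0} \<Longrightarrow> b \<in> {-\<theta>..0} \<Longrightarrow>
      dist a b < d \<Longrightarrow> dist (k a) (k b) < e/3"
    using uniformly_equicontinuous_onD \<open>e > 0\<close> by (metis divide_pos_pos zero_less_numeral)
  have "dist (\<xi> a) (\<xi> b) < e"
    if "\<xi> \<in> S" "a \<in> {-\<theta>..0}" "b \<in> {-\<theta>..0}" "dist a b < d" for \<xi> a b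
  proof -
    obtain k where k: "k \<in> N" "k \<in> mspace (Xspace \<theta>)" "\<xi> \<in> mspace (Xspace \<theta>)"
        "mdist (Xspace \<theta>) k \<xi> < e/3"
      using N \<open>\<xi> \<in> S\<close> by auto
    have "dist (\<xi> a) (k a) < e/3" "dist (k b) (\<xi> b) < e/3"
      using dist_le_mdist_Xspace[OF k(2,3)] that k(4) by (metis dist_commute le_less_trans)+
    moreover have "dist (k a) (k b) < e/3"
      using d k(1) that by blast
    moreover have "dist (\<xi> a) (\<xi> b) \<le> dist (\<xi> a) (k a) + dist (k a) (k b) + dist (k b) (\<xi> b)"
      using dist_triangle[of "\<xi> a" "\<xi> b" "k a"] dist_triangle[of "k a" "\<xi> b" "k b"] by linarith
    ultimately show ?thesis by linarith
  qed
  then show "\<exists>d>0. \<forall>\<xi>\<in>S. \<forall>a\<in>{-\<theta>..0}. \<forall>b\<in>{-\<theta>..0}. dist a b < d \<longrightarrow> dist (\<xi> a) (\<xi> b) < e"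
    using \<open>d > 0\<close> by blast
qed

lemma compactin_Xspace_imp_xnorm_bounded:
  assumes "\<theta> \<ge> 0" "compactin (mtopology_of (Xspace \<theta>)) S"
  obtains R where "\<And>\<xi>. \<xi> \<in> S \<Longrightarrow> xnorm \<theta> \<xi> \<le> R"
proof -
  interpret X: Metric_space "mspace (Xspace \<theta>)" "mdist (Xspace \<theta>)"
    by (rule Metric_space_mspace_mdist)
  have "X.mbounded S"
    using assms(2) by (intro X.compactin_imp_mbounded) (simp add: mtopology_of_def)
  then obtain c B where cB: "S \<subseteq> X.mcball c B"
    unfolding X.mbounded_def by blast
  have "xnorm \<theta> \<xi> \<le> xnorm \<theta> c + B" if "\<xi> \<in> S" for \<xi>
  proof (rule xnorm_le[OF assms(1)])
    fix s assume s: "s \<in> {-\<theta>..0}"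
    have c: "c \<in> mspace (Xspace \<theta>)" "\<xi> \<in> mspace (Xspace \<theta>)" "mdist (Xspace \<theta>) c \<xi> \<le> B"
      using cB that by auto
    have "norm (\<xi> s) \<le> norm (c s) + dist (c s) (\<xi> s)"
      using norm_triangle_sub[of "\<xi> s" "c s"] by (simp add: dist_norm norm_minus_commute)
    also have "\<dots> \<le> xnorm \<theta> c + B"
      using norm_le_xnorm[OF c(1) s] dist_le_mdist_Xspace[OF c(1,2) s] c(3) by linarith
    finally show "norm (\<xi> s) \<le> xnorm \<theta> c + B" .
  qed
  then show ?thesis using that by blast
qed

lemma MCauchy_Xspace_if_uniformly_convergent:
  assumes "range \<sigma> \<subseteq> mspace (Xspace \<theta>)"
    and "\<And>e. e > 0 \<Longrightarrow> \<exists>N. \<forall>n\<ge>N. \<forall>s\<in>{-\<theta>..0}. dist (\<sigma> n s) (g s) < e"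
  shows "Metric_space.MCauchy (mspace (Xspace \<theta>)) (mdist (Xspace \<theta>)) \<sigma>"
proof -
  interpret X: Metric_space "mspace (Xspace \<theta>)" "mdist (Xspace \<theta>)"
    by (rule Metric_space_mspace_mdist)
  show ?thesis
    unfolding X.MCauchy_def
  proof (intro conjI allI impI assms(1))
    fix e :: real assume "e > 0"
    then obtain N where N: "\<forall>n\<ge>N. \<forall>s\<in>{-\<theta>..0}. dist (\<sigma> n s) (g s) < e/3"
      using assms(2)[of "e/3"] by auto
    have "mdist (Xspace \<theta>) (\<sigma> n) (\<sigma> n') < e" if "N \<le> n" "N \<le> n'" for n n'
    proof -
      have "mdist (Xspace \<theta>) (\<sigma> n) (\<sigma> n') \<le> 2*e/3"
      proof (rule mdist_Xspace_le)
        fix s assume "s \<in> {-\<theta>..0}"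
        then have "dist (\<sigma> n s) (g s) < e/3" "dist (\<sigma> n' s) (g s) < e/3"
          using N that by auto
        then show "dist (\<sigma> n s) (\<sigma> n' s) \<le> 2*e/3"
          using dist_triangle2[of "\<sigma> n s" "\<sigma> n' s" "g s"] by linarith
      qed (use \<open>e > 0\<close> in simp)
      then show ?thesis using \<open>e > 0\<close> by linarith
    qed
    then show "\<exists>N. \<forall>n n'. N \<le> n \<longrightarrow> N \<le> n' \<longrightarrow> mdist (Xspace \<theta>) (\<sigma> n) (\<sigma> n') < e"
      by blast
  qed
qed

theorem compactin_closure_of_Xspace_if_uniformly_equicontinuous:
  fixes R :: "(real \<Rightarrow> real^'n) set"
  assumes "R \<subseteq> mspace (Xspace \<theta>)" "\<And>h s. h \<in> R \<Longrightarrow> s \<in> {-\<theta>..0} \<Longrightarrow> norm (h s) \<le> M"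
    and "uniformly_equicontinuous_on {-\<theta>..0} R"
  shows "compactin (mtopology_of (Xspace \<theta>)) (mtopology_of (Xspace \<theta>) closure_of R)"
proof -
  interpret X: Metric_space "mspace (Xspace \<theta>)" "mdist (Xspace \<theta>)"
    by (rule Metric_space_mspace_mdist)
  have "\<exists>r. strict_mono r \<and> X.MCauchy (\<sigma> \<circ> r)"
    if \<sigma>: "range \<sigma> \<subseteq> R" for \<sigma> :: "nat \<Rightarrow> real \<Rightarrow> real^'n"
  proof -
    have bound: "\<And>n s. s \<in> {-\<theta>..0} \<Longrightarrow> norm (\<sigma> n s) \<le> M"
      using \<sigma> assms(2) by blast
    have equicontinuous: "\<And>s e. s \<in> {-\<theta>..0} \<Longrightarrow> 0 < e \<Longrightarrow>
        \<exists>d>0. \<forall>n y. y \<in> {-\<theta>..0} \<and> norm (s - y) < d \<longrightarrow> norm (\<sigma> n s - \<sigma> n y) < e"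
      using uniformly_equicontinuous_onD[OF assms(3)] \<sigma> by (metis dist_norm range_subsetD)
    show ?thesis
    proof (rule Arzela_Ascoli[OF compact_Icc bound equicontinuous])
      fix g and r :: "nat \<Rightarrow> nat"
      assume "strict_mono r"
        and conv: "\<And>e. 0 < e \<Longrightarrow> \<exists>N. \<forall>n s. n \<ge> N \<and> s \<in> {-\<theta>..0} \<longrightarrow> norm (\<sigma> (r n) s - g s) < e"
      have "X.MCauchy (\<sigma> \<circ> r)"
      proof (rule MCauchy_Xspace_if_uniformly_convergent[where g = g])
        have "range (\<sigma> \<circ> r) \<subseteq> range \<sigma>"
          by auto
        then show "range (\<sigma> \<circ> r) \<subseteq> mspace (Xspace \<theta>)"
          using \<sigma> assms(1) by (meson order_trans)
        show "\<exists>N. \<forall>n\<ge>N. \<forall>s\<in>{-\<theta>..0}. dist ((\<sigma> \<circ> r) n s) (g s) < e" if "e > 0" for e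
          using conv[OF that] by (simp add: dist_norm) (meson atLeastAtMost_iff)
      qed
      with \<open>strict_mono r\<close> show ?thesis
        by blast
    qed
  qed
  then have "X.mtotally_bounded R"
    using assms(1) unfolding X.mtotally_bounded_sequentially by blast
  then have "compactin X.mtopology (X.mtopology closure_of R)"
    using X.mtotally_bounded_eq_compact_closure_of[OF mcomplete_Xspace] by blast
  then show ?thesis
    by (simp add: mtopology_of_def)
qed

lemma norm_diff_le_if_has_integral:
  fixes g :: "real \<Rightarrow> 'a::banach"
  assumes "\<And>t. t \<ge> 0 \<Longrightarrow> (g has_integral (x t - x 0)) {0..t}" "0 \<le> a" "a \<le> b"
    and "\<And>r. r \<in> {a..b} \<Longrightarrow> norm (g r) \<le> K"
  shows "norm (x b - x a) \<le> K * (b - a)"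
proof -
  have on_0b: "(g has_integral (x b - x 0)) {0..b}" and on_0a: "(g has_integral (x a - x 0)) {0..a}"
    using assms(1-3) by auto
  then have "integral {0..a} g + integral {a..b} g = integral {0..b} g"
    using assms(2,3) by (intro Henstock_Kurzweil_Integration.integral_combine has_integral_integrable) auto
  then have "x b - x a = integral {a..b} g"
    using on_0a on_0b by (simp add: integral_unique algebra_simps)
  moreover have "g integrable_on {a..b}"
    using on_0b by (rule has_integral_integrable[THEN integrable_subinterval_real]) (use assms(2) in auto)
  moreover have "0 \<le> K"
    using assms(3) assms(4)[of a] by (meson atLeastAtMost_iff norm_ge_zero order_refl order_trans)
  ultimately show ?thesis
    using has_integral_bound[of K g "integral {a..b} g" a b] assms(3,4) by (simp add: has_integral_integral)
qed

definition trajectories ::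
  "real \<Rightarrow> ((real \<Rightarrow> real^'n) \<Rightarrow> real^'m \<Rightarrow> real^'n) \<Rightarrow> (real^'m) set
     \<Rightarrow> (real \<Rightarrow> real^'n) set \<Rightarrow> (real \<Rightarrow> real^'n) set" where
  "trajectories \<theta> f U S = {x. \<exists>\<xi>\<in>S. \<exists>u\<in>inputs_in U. is_solution \<theta> f \<xi> u x}"

lemma reach_set_eq_hist_trajectories:
  "reach_set \<theta> f T U S = {hist \<theta> x t | x t. x \<in> trajectories \<theta> f U S \<and> t \<in> {0..T}}"
  unfolding reach_set_def trajectories_def by auto

lemma solution_lipschitz_on:
  assumes sol: "is_solution \<theta> f \<xi> u x" and "0 \<le> T"
    and hist_bound: "\<And>t. t \<in> {0..T} \<Longrightarrow> xnorm \<theta> (hist \<theta> x t) \<le> R"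
    and input_bound: "\<And>t. t \<in> {0..T} \<Longrightarrow> norm (u t) \<le> R"
    and f_bound: "\<And>\<eta> v. \<eta> \<in> mspace (Xspace \<theta>) \<Longrightarrow> xnorm \<theta> \<eta> \<le> R \<Longrightarrow> norm v \<le> R \<Longrightarrow>
      norm (f \<eta> v) \<le> K"
  shows "K-lipschitz_on {0..T} x"
proof (rule lipschitz_onI)
  have integral_eq: "\<And>t. t \<ge> 0 \<Longrightarrow>
      ((\<lambda>s. f (hist \<theta> x s) (u s)) has_integral (x t - x 0)) {0..t}"
    and "continuous_on {-\<theta>..} x"
    using sol by (auto simp: is_solution_def)
  have rhs_bound: "norm (f (hist \<theta> x t) (u t)) \<le> K" if "t \<in> {0..T}" for t
  proof (rule f_bound)
    show "hist \<theta> x t \<in> mspace (Xspace \<theta>)"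
      using hist_in_mspace_Xspace[OF \<open>continuous_on {-\<theta>..} x\<close>] that by simp
  qed (use that hist_bound input_bound in auto)
  have "norm (f (hist \<theta> x 0) (u 0)) \<le> K"
    using rhs_bound \<open>0 \<le> T\<close> by simp
  then show "0 \<le> K"
    using norm_ge_zero order_trans by blast
  have increment: "norm (x q - x p) \<le> K * (q - p)" if "0 \<le> p" "p \<le> q" "q \<le> T" for p q
    using that by (intro norm_diff_le_if_has_integral[OF integral_eq] rhs_bound) auto
  show "dist (x p) (x q) \<le> K * dist p q" if "p \<in> {0..T}" "q \<in> {0..T}" for p q
    using that increment[of p q] increment[of q p]
    by (cases "p \<le> q") (auto simp: dist_norm dist_real_def norm_minus_commute)
qed

lemma RFC_hist_bound:
  assumes "RFC \<theta> f" "T > 0"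
  obtains C where "\<And>\<xi> u x t. \<xi> \<in> mspace (Xspace \<theta>) \<Longrightarrow> xnorm \<theta> \<xi> \<le> R \<Longrightarrow> u \<in> inputs \<Longrightarrow>
      (\<And>t. t \<ge> 0 \<Longrightarrow> norm (u t) \<le> R) \<Longrightarrow> is_solution \<theta> f \<xi> u x \<Longrightarrow> t \<in> {0..T} \<Longrightarrow>
      xnorm \<theta> (hist \<theta> x t) \<le> C"
proof -
  obtain C where C: "\<forall>\<xi>\<in>mspace (Xspace \<theta>). \<forall>u\<in>inputs. \<forall>x. \<forall>t\<in>{0..T}.
      xnorm \<theta> \<xi> \<le> max R 1 \<and> unorm_le u (max R 1) \<and> is_solution \<theta> f \<xi> u x
        \<longrightarrow> xnorm \<theta> (hist \<theta> x t) \<le> C"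
    using assms unfolding RFC_def by (meson less_max_iff_disj zero_less_one)
  have "unorm_le u (max R 1)" if "\<And>t. t \<ge> 0 \<Longrightarrow> norm (u t) \<le> R" for u :: "real \<Rightarrow> real^'m"
    unfolding unorm_le_def using that by (intro AE_I2) (auto simp: le_max_iff_disj)
  with C show ?thesis
    using that by (meson max.coboundedI1)
qed

lemma trajectories_hist_bounded:
  assumes "RFC \<theta> f" "\<theta> \<ge> 0" "T > 0" "compactin (mtopology_of (Xspace \<theta>)) S" "bounded U"
  obtains C where
    "\<And>x t. x \<in> trajectories \<theta> f U S \<Longrightarrow> t \<in> {0..T} \<Longrightarrow> xnorm \<theta> (hist \<theta> x t) \<le> C"
proof -
  obtain R0 where R0: "\<And>\<xi>. \<xi> \<in> S \<Longrightarrow> xnorm \<theta> \<xi> \<le> R0"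
    using compactin_Xspace_imp_xnorm_bounded[OF assms(2,4)] by blast
  obtain B where B: "\<And>v. v \<in> U \<Longrightarrow> norm v \<le> B"
    using assms(5) bounded_iff by blast
  define R where "R = max R0 B"
  obtain C where C: "\<And>\<xi> u x t. \<xi> \<in> mspace (Xspace \<theta>) \<Longrightarrow> xnorm \<theta> \<xi> \<le> R \<Longrightarrow> u \<in> inputs \<Longrightarrow>
      (\<And>t. t \<ge> 0 \<Longrightarrow> norm (u t) \<le> R) \<Longrightarrow> is_solution \<theta> f \<xi> u x \<Longrightarrow> t \<in> {0..T} \<Longrightarrow>
      xnorm \<theta> (hist \<theta> x t) \<le> C"
    using RFC_hist_bound[OF assms(1,3)] by blast
  have S: "S \<subseteq> mspace (Xspace \<theta>)"
    using compactin_subset_topspace[OF assms(4)] by simp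
  have "xnorm \<theta> (hist \<theta> x t) \<le> C"
    if x: "x \<in> trajectories \<theta> f U S" and t: "t \<in> {0..T}" for x t
  proof -
    obtain \<xi> u where \<xi>: "\<xi> \<in> S" and u: "u \<in> inputs" "\<And>t. t \<ge> 0 \<Longrightarrow> u t \<in> U"
      and sol: "is_solution \<theta> f \<xi> u x"
      using x unfolding trajectories_def inputs_in_def by blast
    show ?thesis
    proof (rule C[OF _ _ u(1) _ sol t])
      show "\<xi> \<in> mspace (Xspace \<theta>)" "xnorm \<theta> \<xi> \<le> R"
        using S \<xi> R0[OF \<xi>] by (auto simp: R_def)
      show "norm (u t) \<le> R" if "t \<ge> 0" for t
        using B[OF u(2)[OF that]] by (simp add: R_def)
    qed
  qed
  with that show ?thesis by blast
qed

lemma trajectories_lipschitz_on: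
  assumes "bounded_on_bounded \<theta> f" "T \<ge> 0" "bounded U"
    and hist_bound: "\<And>x t. x \<in> trajectories \<theta> f U S \<Longrightarrow> t \<in> {0..T} \<Longrightarrow> xnorm \<theta> (hist \<theta> x t) \<le> C"
  obtains K where "\<And>x. x \<in> trajectories \<theta> f U S \<Longrightarrow> K-lipschitz_on {0..T} x"
proof -
  obtain B where B: "\<And>v. v \<in> U \<Longrightarrow> norm v \<le> B"
    using assms(3) bounded_iff by blast
  obtain K where K: "\<forall>\<eta>\<in>mspace (Xspace \<theta>). \<forall>v.
      xnorm \<theta> \<eta> \<le> max C B \<and> norm v \<le> max C B \<longrightarrow> norm (f \<eta> v) \<le> K"
    using assms(1) unfolding bounded_on_bounded_def by blast
  have "K-lipschitz_on {0..T} x" if x: "x \<in> trajectories \<theta> f U S" for x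
  proof -
    obtain \<xi> u where u: "u \<in> inputs_in U" and sol: "is_solution \<theta> f \<xi> u x"
      using x by (auto simp: trajectories_def)
    show ?thesis
    proof (rule solution_lipschitz_on[OF sol \<open>T \<ge> 0\<close>, where R = "max C B"])
      show "xnorm \<theta> (hist \<theta> x t) \<le> max C B" if "t \<in> {0..T}" for t
        using hist_bound[OF x that] by simp
      show "norm (u t) \<le> max C B" if "t \<in> {0..T}" for t
        using B[of "u t"] u that by (simp add: inputs_in_def le_max_iff_disj)
      show "norm (f \<eta> v) \<le> K"
        if "\<eta> \<in> mspace (Xspace \<theta>)" "xnorm \<theta> \<eta> \<le> max C B" "norm v \<le> max C B" for \<eta> v
        using K that by blast
    qed
  qed
  with that show ?thesis by blast
qed

lemma trajectories_uniformly_equicontinuous: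
  assumes "compactin (mtopology_of (Xspace \<theta>)) S"
    and "\<And>x. x \<in> trajectories \<theta> f U S \<Longrightarrow> K-lipschitz_on {0..T} x"
  shows "uniformly_equicontinuous_on {-\<theta>..T} (trajectories \<theta> f U S)"
proof (rule uniformly_equicontinuous_on_interval_Un)
  show "uniformly_equicontinuous_on {-\<theta>..0} (trajectories \<theta> f U S)"
    by (rule uniformly_equicontinuous_on_if_agree
        [OF compactin_Xspace_imp_uniformly_equicontinuous[OF assms(1)]])
      (auto simp: trajectories_def is_solution_def)
  show "uniformly_equicontinuous_on {0..T} (trajectories \<theta> f U S)"
    using assms(2) by (rule uniformly_equicontinuous_on_if_lipschitz)
qed

theorem lemma2p3:
  fixes \<theta> T :: real
    and f :: "(real \<Rightarrow> real^'n) \<Rightarrow> real^'m \<Rightarrow> real^'n"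
    and S :: "(real \<Rightarrow> real^'n) set"
    and U :: "(real^'m) set"
  assumes "\<theta> > 0"
    and "loc_lipschitz \<theta> f"
    and "bounded_on_bounded \<theta> f"
    and "RFC \<theta> f"
    and "compactin (mtopology_of (Xspace \<theta>)) S"
    and "bounded U"
    and "T > 0"
  shows "compactin (mtopology_of (Xspace \<theta>))
           ((mtopology_of (Xspace \<theta>)) closure_of (reach_set \<theta> f T U S))"
proof -
  \<comment> \<open>Local Lipschitz continuity of f only serves uniqueness of solutions.\<close>
  obtain C where hist_bound: "\<And>x t. x \<in> trajectories \<theta> f U S \<Longrightarrow> t \<in> {0..T} \<Longrightarrow>
      xnorm \<theta> (hist \<theta> x t) \<le> C"
    using trajectories_hist_bounded[OF assms(4) _ assms(7,5,6)] assms(1) by auto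
  obtain K where lipschitz: "\<And>x. x \<in> trajectories \<theta> f U S \<Longrightarrow> K-lipschitz_on {0..T} x"
    using trajectories_lipschitz_on[where T = T and S = S, OF assms(3) _ assms(6) hist_bound] assms(7)
    by auto
  let ?R = "reach_set \<theta> f T U S"
  have "?R \<subseteq> mspace (Xspace \<theta>)"
    by (auto simp: reach_set_def is_solution_def intro: hist_in_mspace_Xspace)
  moreover have "norm (h s) \<le> C" if "h \<in> ?R" "s \<in> {-\<theta>..0}" for h s
  proof -
    obtain x t where "h = hist \<theta> x t" "x \<in> trajectories \<theta> f U S" "t \<in> {0..T}"
      using \<open>h \<in> ?R\<close> unfolding reach_set_eq_hist_trajectories by blast
    then show ?thesis
      using norm_le_xnorm[of h \<theta> s] hist_bound that \<open>?R \<subseteq> mspace (Xspace \<theta>)\<close> by force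
  qed
  moreover have "uniformly_equicontinuous_on {-\<theta>..0} ?R"
    unfolding reach_set_eq_hist_trajectories
    by (rule uniformly_equicontinuous_on_hist
        [OF trajectories_uniformly_equicontinuous[OF assms(5) lipschitz]])
  ultimately show ?thesis
    by (rule compactin_closure_of_Xspace_if_uniformly_equicontinuous)
qed

end
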